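(* Under the standing assumptions, $\tau(\theta)>0$ for every $\theta\in(\pi/2,\pi)$.
   Context: Standing assumptions: $a,b\in\mathbb{R}$ with $b>0$, $1+a+b>0$, $9-27a+b>0$, $2-8a+8a^2+ab\ne0$, $b+1-a\ne0$. Let $f^*(\zeta,\theta)=(\zeta+2\cos\theta)(2\zeta\cos\theta+1)+b\zeta-a(\zeta+2\cos\theta)^3$ and $f(\zeta,\theta)=\zeta^3f^*(1/\zeta,\theta)=\zeta(1+2\zeta\cos\theta)(2\cos\theta+\zeta)+b\zeta^2-a(1+2\zeta\cos\theta)^3$. Under these assumptions, for each $\theta\in(\pi/2,\pi)$ the polynomial $f^*(\cdot,\theta)$ has exactly one real zero in $(-1,1)$; denote it $w(\theta)$ and write $\zeta(\theta)=1/w(\theta)$ (taken as $\infty$ when $w(\theta)=0$). Define $\tau(\theta)=-w(\theta)-2\cos\theta$. *)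

theory Defs
  imports "HOL-Analysis.Analysis"
begin

definition fstar :: "real \<Rightarrow> real \<Rightarrow> real \<Rightarrow> real \<Rightarrow> real" where
  "fstar a b z \<theta> = (z + 2 * cos \<theta>) * (2 * z * cos \<theta> + 1) + b * z - a * (z + 2 * cos \<theta>) ^ 3"

text \<open>The unique real zero of fstar in the open interval (-1,1) (exists under the standing assumptions).\<close>
definition wzero :: "real \<Rightarrow> real \<Rightarrow> real \<Rightarrow> real" where
  "wzero a b \<theta> = (THE w. w \<in> {-1<..<1} \<and> fstar a b w \<theta> = 0)"

definition tau :: "real \<Rightarrow> real \<Rightarrow> real \<Rightarrow> real" where
  "tau a b \<theta> = - wzero a b \<theta> - 2 * cos \<theta>"

end

theory Submission
  imports Defs
begin

text \<open>
  Write \<open>c = cos \<theta> \<in> (-1, 0)\<close> and shift the variable to \<open>u = z + 2c\<close>, so that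
  \<open>\<tau>(\<theta>) = -u\<close> at the zero.  The shifted cubic is negative at \<open>u = 2c - 1\<close> and positive at
  \<open>u = 2c + 1\<close>, hence has a zero in between, and it is positive on \<open>[0, 2c + 1)\<close>, so
  every zero in that window is negative.  If there were two, the cubic would be forced to have
  positive leading coefficient \<open>-a\<close> and a third zero in the window; but by Vieta the three
  zeros sum to \<open>2c/a > 0\<close>.
\<close>

lemma cubic_factor_two_roots:
  fixes A B C D x y z :: real
  assumes "A*y^3 + B*y^2 + C*y + D = 0" and "A*z^3 + B*z^2 + C*z + D = 0" and "y \<noteq> z"
  shows "A*x^3 + B*x^2 + C*x + D = (x - y) * (x - z) * (A*(x + y + z) + B)"
proof -
  have "(y - z) * (A*(y^2 + y*z + z^2) + B*(y + z) + C) = 0"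
    using assms(1,2) by algebra
  then have C: "C = - A*(y^2 + y*z + z^2) - B*(y + z)"
    using assms(3) by simp
  show ?thesis
    using assms(1) unfolding C by algebra
qed

lemma cubic_third_root_between:
  fixes A B C D lo hi y z :: real
  assumes p: "\<And>x. p x = A*x^3 + B*x^2 + C*x + D"
    and roots: "p y = 0" "p z = 0" "y \<noteq> z"
    and between: "y \<in> {lo<..<hi}" "z \<in> {lo<..<hi}"
    and signs: "p lo < 0" "p hi > 0"
  obtains r where "A > 0" "r \<in> {lo<..<hi}" "p r = 0" "A*(y + z + r) = - B"
proof -
  define L where "L x = A*(x + y + z) + B" for x
  have factor: "p x = (x - y) * (x - z) * L x" for x
    using cubic_factor_two_roots[of A y B C D z x] roots unfolding p L_def by simp
  have "(lo - y) * (lo - z) > 0" and "(hi - y) * (hi - z) > 0"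
    using between by (auto intro: mult_neg_neg)
  then have "L lo < 0" and "L hi > 0"
    using signs factor[of lo] factor[of hi] by (auto simp: mult_less_0_iff zero_less_mult_iff)
  moreover have "L hi - L lo = A * (hi - lo)"
    unfolding L_def by algebra
  ultimately have "A * (hi - lo) > 0"
    by linarith
  then have "A > 0"
    using between by (auto simp: zero_less_mult_iff)
  define r where "r = - (y + z) - B / A"
  have L_r: "L x = A * (x - r)" for x
    using \<open>A > 0\<close> unfolding L_def r_def by (simp add: algebra_simps)
  show thesis
  proof
    show "A > 0" by fact
    show "r \<in> {lo<..<hi}"
      using \<open>L lo < 0\<close> \<open>L hi > 0\<close> \<open>A > 0\<close>
      unfolding L_r by (auto simp: mult_less_0_iff zero_less_mult_iff)
    show "p r = 0"
      using factor[of r] unfolding L_r by simp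
    show "A*(y + z + r) = - B"
      using \<open>A > 0\<close> unfolding r_def by (simp add: algebra_simps)
  qed
qed

definition shifted_cubic :: "real \<Rightarrow> real \<Rightarrow> real \<Rightarrow> real \<Rightarrow> real" where
  "shifted_cubic a b c u = - a*u^3 + 2*c*u^2 + (1 + b - 4*c^2)*u - 2*b*c"

lemma fstar_eq_shifted_cubic: "fstar a b z \<theta> = shifted_cubic a b (cos \<theta>) (z + 2 * cos \<theta>)"
  unfolding fstar_def shifted_cubic_def by (simp add: algebra_simps power2_eq_square power3_eq_cube)

lemma shifted_cubic_pos:
  fixes a b c u :: real
  assumes "b > 0" and "a < 1 + b" and "c < 0" and "0 \<le> u" and "u < 2*c + 1"
  shows "shifted_cubic a b c u > 0"
proof -
  have "u^3 \<le> u"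
    using power_decreasing[of 1 3 u] assms by simp
  have "a*u^3 \<le> (1 + b)*u^3"
    using assms(2,4) by (intro mult_right_mono) auto
  have "u*(u - 2*c) \<le> 1 + 2*c"
    using mult_mono[of u "1 + 2*c" "u - 2*c" 1] assms(3-5) by simp
  moreover have "c*(2*c + 1) < 0"
    using assms(3-5) by (simp add: mult_neg_pos)
  ultimately have "u^2 - 2*c*u + 4*c^2 \<le> 1"
    by (simp add: power2_eq_square algebra_simps)
  then have "u*(u^2 - 2*c*u + 4*c^2) \<le> u"
    using mult_left_mono[of _ 1 u] assms(4) by simp
  moreover have "b*(u - u^3) \<ge> 0" and "b*c < 0"
    using assms \<open>u^3 \<le> u\<close> by (simp_all add: mult_pos_neg)
  moreover have "shifted_cubic a b c u
      = (u - u*(u^2 - 2*c*u + 4*c^2)) + b*(u - u^3) - 2*b*c + ((1 + b)*u^3 - a*u^3)"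
    unfolding shifted_cubic_def by (simp add: algebra_simps power2_eq_square power3_eq_cube)
  ultimately show ?thesis
    using \<open>a*u^3 \<le> (1 + b)*u^3\<close> by linarith
qed

lemma shifted_cubic_root_neg:
  fixes a b c u :: real
  assumes "b > 0" and "a < 1 + b" and "c < 0" and "u < 2*c + 1" and "shifted_cubic a b c u = 0"
  shows "u < 0"
  using shifted_cubic_pos[of b a c u] assms by force

lemma shifted_cubic_left_neg:
  fixes a b c :: real
  assumes "b > 0" and "9 - 27*a + b > 0" and "-1 < c" and "c < 0"
  shows "shifted_cubic a b c (2*c - 1) < 0"
proof -
  define w where "w = 1 - 2*c"
  have w: "1 < w" "w < 3"
    using assms(3,4) unfolding w_def by auto
  have "shifted_cubic a b c (2*c - 1) = a*w^3 - w^2 - b"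
    unfolding shifted_cubic_def w_def by (simp add: algebra_simps power2_eq_square power3_eq_cube)
  moreover have "a*w^3 < w^2 + b"
  proof (cases "a \<le> 0")
    case True
    then have "a*w^3 \<le> 0"
      using w by (simp add: mult_nonpos_nonneg)
    then show ?thesis
      using assms(1) zero_le_power2[of w] by linarith
  next
    case False
    have "w^2 < 3^2"
      using w by (intro power_strict_mono) auto
    have "a*w^3 = (a*w)*w^2"
      by (simp add: power2_eq_square power3_eq_cube)
    also have "\<dots> \<le> (3*a)*w^2"
      using False w by (intro mult_right_mono) auto
    also have "\<dots> \<le> (1 + b/9)*w^2"
      using assms(2) by (intro mult_right_mono) auto
    also have "\<dots> < w^2 + b"
      using \<open>w^2 < 3^2\<close> assms(1) by (simp add: algebra_simps)
    finally show ?thesis .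
  qed
  ultimately show ?thesis
    by simp
qed

lemma shifted_cubic_right_pos:
  fixes a b c :: real
  assumes "b > 0" and "a < 1 + b" and "1 + a + b > 0" and "-1 < c" and "c < 0"
  shows "shifted_cubic a b c (2*c + 1) > 0"
proof -
  define w where "w = 1 + 2*c"
  have w: "\<bar>w\<bar> < 1"
    using assms(4,5) unfolding w_def by auto
  have "shifted_cubic a b c (2*c + 1) = w^2 + b - a*w^3"
    unfolding shifted_cubic_def w_def by (simp add: algebra_simps power2_eq_square power3_eq_cube)
  moreover have "a*w^3 < w^2 + b"
  proof -
    have "a*w^3 \<le> \<bar>a\<bar>*\<bar>w\<bar>^3"
      by (metis abs_ge_self abs_mult power_abs)
    also have "\<dots> \<le> \<bar>a\<bar>*w^2"
      using power_decreasing[of 2 3 "\<bar>w\<bar>"] w by (simp add: mult_left_mono)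
    also have "\<dots> \<le> (1 + b)*w^2"
      using assms(2,3) by (intro mult_right_mono) auto
    also have "\<dots> < w^2 + b"
      using w assms(1) abs_square_less_1[of w] by (simp add: algebra_simps)
    finally show ?thesis .
  qed
  ultimately show ?thesis
    by simp
qed

lemma shifted_cubic_root_exists:
  fixes a b c :: real
  assumes "b > 0" and "1 + a + b > 0" and "9 - 27*a + b > 0" and "-1 < c" and "c < 0"
  obtains u where "u \<in> {2*c - 1<..<2*c + 1}" and "shifted_cubic a b c u = 0"
proof -
  have "a < 1 + b"
    using assms(1,3) by linarith
  note left = shifted_cubic_left_neg[OF assms(1,3-5)]
    and right = shifted_cubic_right_pos[OF assms(1) \<open>a < 1 + b\<close> assms(2,4,5)]
  have "continuous_on {2*c - 1..2*c + 1} (shifted_cubic a b c)"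
    unfolding shifted_cubic_def by (intro continuous_intros)
  then obtain u where "2*c - 1 \<le> u" "u \<le> 2*c + 1" "shifted_cubic a b c u = 0"
    using IVT'[of "shifted_cubic a b c" "2*c - 1" 0 "2*c + 1"] left right by auto
  moreover have "u \<noteq> 2*c - 1" and "u \<noteq> 2*c + 1"
    using left right calculation(3) by auto
  ultimately show thesis
    using that[of u] by simp
qed

lemma shifted_cubic_root_unique:
  fixes a b c u v :: real
  assumes "b > 0" and "1 + a + b > 0" and "9 - 27*a + b > 0" and "-1 < c" and "c < 0"
    and "u \<in> {2*c - 1<..<2*c + 1}" and "shifted_cubic a b c u = 0"
    and "v \<in> {2*c - 1<..<2*c + 1}" and "shifted_cubic a b c v = 0"
  shows "u = v"
proof (rule ccontr)
  assume "u \<noteq> v"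
  have "a < 1 + b"
    using assms(1,3) by linarith
  have coeffs: "shifted_cubic a b c x = (- a)*x^3 + (2*c)*x^2 + (1 + b - 4*c^2)*x + (- 2*b*c)" for x
    unfolding shifted_cubic_def by simp
  obtain r where "- a > 0" "r \<in> {2*c - 1<..<2*c + 1}" "shifted_cubic a b c r = 0"
    and vieta: "(- a)*(u + v + r) = - (2*c)"
    using cubic_third_root_between[OF coeffs assms(7,9) \<open>u \<noteq> v\<close> assms(6,8)
        shifted_cubic_left_neg[OF assms(1,3-5)]
        shifted_cubic_right_pos[OF assms(1) \<open>a < 1 + b\<close> assms(2,4,5)]] .
  then have "u < 0" and "v < 0" and "r < 0"
    using shifted_cubic_root_neg[OF assms(1) \<open>a < 1 + b\<close> assms(5)] assms(6-9) by auto
  then have "u + v + r < 0"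
    by simp
  then have "(- a)*(u + v + r) < 0"
    using mult_pos_neg[OF \<open>- a > 0\<close>] by blast
  then show False
    using vieta assms(5) by simp
qed

theorem mainTheorem10:
  fixes a b \<theta> :: real
  assumes "b > 0" and "1 + a + b > 0" and "9 - 27 * a + b > 0"
    and "2 - 8 * a + 8 * a ^ 2 + a * b \<noteq> 0" and "b + 1 - a \<noteq> 0"
    and "\<theta> \<in> {pi/2<..<pi}"
  shows "tau a b \<theta> > 0"
proof -
  define c where "c = cos \<theta>"
  have "-1 < c" and "c < 0"
    using assms(6) cos_monotone_0_pi[of \<theta> pi] cos_gt_zero_pi[of "pi - \<theta>"]
    unfolding c_def by auto
  note hyps = assms(1-3) \<open>-1 < c\<close> \<open>c < 0\<close>
  obtain u where u: "u \<in> {2*c - 1<..<2*c + 1}" "shifted_cubic a b c u = 0"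
    using shifted_cubic_root_exists[OF hyps] .
  have "wzero a b \<theta> = u - 2*c"
    unfolding wzero_def
  proof (rule the_equality)
    show "u - 2*c \<in> {-1<..<1} \<and> fstar a b (u - 2*c) \<theta> = 0"
      using u by (simp add: fstar_eq_shifted_cubic c_def)
    show "w = u - 2*c" if "w \<in> {-1<..<1} \<and> fstar a b w \<theta> = 0" for w
      using shifted_cubic_root_unique[OF hyps, of "w + 2*c" u] that u
      by (auto simp: fstar_eq_shifted_cubic c_def)
  qed
  moreover have "u < 0"
    using shifted_cubic_root_neg[of b a c u] hyps u by auto
  ultimately show ?thesis
    unfolding tau_def c_def by simp
qed

end
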